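(* Assume superclub holds. Then for every collection $\{C_\alpha:\alpha<\omega_2\}$ of club subsets of $\omega_1$ there are pairwise distinct ordinals $\beta_\xi<\omega_2$ ($\xi<\omega_1$) such that $\bigcap_{\xi<\omega_1}C_{\beta_\xi}$ is a club subset of $\omega_1$.
   Context: A superclub sequence is a sequence $\langle A_\delta:\delta\in\lim(\omega_1)\rangle$ such that each $A_\delta$ is a cofinal subset of $\delta$ and for every unbounded $x\subseteq\omega_1$ there is an unbounded $y\subseteq x$ such that $\{\delta<\omega_1: y\cap\delta=A_\delta\}$ is stationary in $\omega_1$. Superclub (at $\aleph_1$) means a superclub sequence exists. *)

theory Defs
  imports Main "HOL-Library.Countable_Set"
begin

text \<open>omega_1 is modelled by a well-ordered type that is uncountable and all of
whose proper initial segments are countable; omega_2 by a well-ordered type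
that does not inject into omega_1 but all of whose proper initial segments do.\<close>

definition is_omega1_type :: "'a::wellorder itself \<Rightarrow> bool" where
  "is_omega1_type _ \<longleftrightarrow> uncountable (UNIV :: 'a set) \<and> (\<forall>x::'a. countable {..<x})"

definition is_omega2_type :: "'b::wellorder itself \<Rightarrow> 'a::wellorder itself \<Rightarrow> bool" where
  "is_omega2_type _ _ \<longleftrightarrow>
     (\<forall>x::'b. \<exists>f::'b \<Rightarrow> 'a. inj_on f {..<x}) \<and> \<not> (\<exists>f::'b \<Rightarrow> 'a. inj f)"

definition is_limit :: "'a::wellorder \<Rightarrow> bool" where
  "is_limit \<delta> \<longleftrightarrow> (\<exists>\<gamma>. \<gamma> < \<delta>) \<and> (\<forall>\<gamma><\<delta>. \<exists>\<eta>. \<gamma> < \<eta> \<and> \<eta> < \<delta>)"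

definition cofinal_in :: "'a::wellorder set \<Rightarrow> 'a \<Rightarrow> bool" where
  "cofinal_in A \<delta> \<longleftrightarrow> A \<subseteq> {..<\<delta>} \<and> (\<forall>\<gamma><\<delta>. \<exists>a\<in>A. \<gamma> \<le> a)"

definition unbounded :: "'a::wellorder set \<Rightarrow> bool" where
  "unbounded A \<longleftrightarrow> (\<forall>\<gamma>. \<exists>a\<in>A. \<gamma> \<le> a)"

definition closed_set :: "'a::wellorder set \<Rightarrow> bool" where
  "closed_set C \<longleftrightarrow> (\<forall>\<delta>. is_limit \<delta> \<and> cofinal_in (C \<inter> {..<\<delta>}) \<delta> \<longrightarrow> \<delta> \<in> C)"

definition club :: "'a::wellorder set \<Rightarrow> bool" where
  "club C \<longleftrightarrow> closed_set C \<and> unbounded C"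

definition stationary :: "'a::wellorder set \<Rightarrow> bool" where
  "stationary S \<longleftrightarrow> (\<forall>C. club C \<longrightarrow> S \<inter> C \<noteq> {})"

definition superclub_seq :: "('a::wellorder \<Rightarrow> 'a set) \<Rightarrow> bool" where
  "superclub_seq A \<longleftrightarrow>
     (\<forall>\<delta>. is_limit \<delta> \<longrightarrow> cofinal_in (A \<delta>) \<delta>) \<and>
     (\<forall>x. unbounded x \<longrightarrow>
        (\<exists>y. y \<subseteq> x \<and> unbounded y \<and>
             stationary {\<delta>. is_limit \<delta> \<and> y \<inter> {..<\<delta>} = A \<delta>}))"

definition superclub :: "'a::wellorder itself \<Rightarrow> bool" where
  "superclub _ \<longleftrightarrow> (\<exists>A :: 'a \<Rightarrow> 'a set. superclub_seq A)"

end

theory Submission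
  imports Defs
begin

(* Fix a superclub sequence A.  As \<omega>\<^sub>2 is not a union of \<omega>\<^sub>1 countable sets, there is an index
   \<alpha>\<^sub>0 such that A \<delta> \<subseteq> C \<alpha>\<^sub>0 always leaves uncountably many \<alpha> with A \<delta> \<subseteq> C \<alpha>; hence there is an
   injective \<beta>\<^sub>0 with A \<delta> \<subseteq> C (\<beta>\<^sub>0 \<delta>) whenever A \<delta> \<subseteq> C \<alpha>\<^sub>0.  Apply the superclub property to
   the club C \<alpha>\<^sub>0 \<inter> \<Delta>\<^sub>\<delta> C (\<beta>\<^sub>0 \<delta>): it yields an unbounded y inside it with y \<inter> \<delta> = A \<delta> for
   stationarily many limits \<delta>.  For each such \<delta>, y \<subseteq> C (\<beta>\<^sub>0 \<delta>): below \<delta> since y \<inter> \<delta> = A \<delta>,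
   at \<delta> since A \<delta> is cofinal in \<delta> and C (\<beta>\<^sub>0 \<delta>) is closed, above \<delta> by diagonality.  So \<beta>\<^sub>0,
   restricted to \<omega>\<^sub>1 of these \<delta>, has y inside the intersection of its clubs. *)

unbundle cardinal_syntax

lemma ex_point_only_in_uncountable_members:
  fixes I :: "'a \<Rightarrow> 'b set"
  assumes "infinite (UNIV :: 'a set)" and "\<nexists>f :: 'b \<Rightarrow> 'a. inj f"
  shows "\<exists>b. \<forall>i. b \<in> I i \<longrightarrow> uncountable (I i)"
proof (rule ccontr)
  assume none: "\<not> ?thesis"
  define J where "J i = (if countable (I i) then I i else {})" for i
  have "|J i| \<le>o |UNIV :: 'a set|" for i
  proof -
    have "|J i| \<le>o |UNIV :: nat set|"
      unfolding card_of_ordLeq[symmetric] J_def countable_def by auto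
    moreover have "|UNIV :: nat set| \<le>o |UNIV :: 'a set|"
      using assms(1) infinite_iff_card_of_nat by blast
    ultimately show ?thesis by (rule ordLeq_transitive)
  qed
  then have "|\<Union>i. J i| \<le>o |UNIV :: 'a set|"
    using card_of_UNION_ordLeq_infinite[OF assms(1) card_of_mono1] by blast
  moreover have "(\<Union>i. J i) = UNIV"
    using none unfolding J_def by fastforce
  ultimately obtain f :: "'b \<Rightarrow> 'a" where "inj_on f UNIV"
    unfolding card_of_ordLeq[symmetric] by auto
  then show False using assms(2) by blast
qed

lemma omega1_countable_bounded:
  assumes "is_omega1_type TYPE('a::wellorder)" and "countable (K :: 'a set)"
  shows "\<exists>b. \<forall>x\<in>K. x < b"
proof (rule ccontr)
  assume "\<not> ?thesis"
  then have "\<forall>b. \<exists>x\<in>K. b \<le> x" by (meson not_less)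
  then have "UNIV \<subseteq> (\<Union>x\<in>K. insert x {..<x})" by (auto simp: le_less)
  moreover have "countable (\<Union>x\<in>K. insert x {..<x})"
    using assms unfolding is_omega1_type_def by auto
  ultimately show False
    using assms(1) countable_subset unfolding is_omega1_type_def by blast
qed

lemma omega1_unbounded_gt:
  assumes "is_omega1_type TYPE('a::wellorder)" and "unbounded (E :: 'a set)"
  shows "\<exists>a\<in>E. \<gamma> < a"
proof -
  obtain b where "\<gamma> < b" using omega1_countable_bounded[OF assms(1), of "{\<gamma>}"] by auto
  moreover obtain a where "a \<in> E" "b \<le> a" using assms(2) unfolding unbounded_def by blast
  ultimately show ?thesis using less_le_trans by blast
qed

lemma omega1_unbounded_imp_uncountable:
  assumes "is_omega1_type TYPE('a::wellorder)" and "unbounded (S :: 'a set)"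
  shows "uncountable S"
proof
  assume "countable S"
  then obtain b where "\<forall>s\<in>S. s < b" using omega1_countable_bounded[OF assms(1)] by blast
  then show False using assms(2) unfolding unbounded_def by (meson not_less)
qed

lemma omega1_inj_choice:
  fixes X :: "'a::wellorder \<Rightarrow> 'c set"
  assumes "is_omega1_type TYPE('a)" and "\<And>a. uncountable (X a)"
  shows "\<exists>g. inj g \<and> (\<forall>a. g a \<in> X a)"
proof -
  define g where "g = wfrec {(x, y). x < y} (\<lambda>g a. SOME x. x \<in> X a - g ` {..<a})"
  have g_fresh: "g a \<in> X a - g ` {..<a}" for a
  proof -
    have "g a = (SOME x. x \<in> X a - g ` {..<a})"
      unfolding g_def by (subst wfrec[OF wf]) (simp add: cut_apply image_def)
    moreover have "countable (g ` {..<a})"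
      using assms(1) unfolding is_omega1_type_def by simp
    then have "X a - g ` {..<a} \<noteq> {}"
      using assms(2) by (metis Diff_eq_empty_iff countable_subset)
    ultimately show ?thesis by (metis some_in_eq)
  qed
  have "inj g"
  proof (rule linorder_injI)
    fix a b :: 'a assume "a < b"
    then have "g a \<in> g ` {..<b}" by simp
    then show "g a \<noteq> g b" using g_fresh[of b] by auto
  qed
  then show ?thesis using g_fresh by blast
qed

lemma closed_setD:
  assumes "closed_set E" and "is_limit \<delta>" and "cofinal_in B \<delta>" and "B \<subseteq> E"
  shows "\<delta> \<in> E"
proof -
  have "cofinal_in (E \<inter> {..<\<delta>}) \<delta>" using assms(3,4) unfolding cofinal_in_def by blast
  then show ?thesis using assms(1,2) unfolding closed_set_def by blast
qed

lemma closed_set_Inter: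
  assumes "\<And>E. E \<in> \<F> \<Longrightarrow> closed_set E"
  shows "closed_set (\<Inter>\<F>)"
  unfolding closed_set_def
proof (intro allI impI InterI)
  fix \<delta> E assume "is_limit \<delta> \<and> cofinal_in (\<Inter>\<F> \<inter> {..<\<delta>}) \<delta>" and "E \<in> \<F>"
  then show "\<delta> \<in> E" using assms closed_setD[of E \<delta> "\<Inter>\<F> \<inter> {..<\<delta>}"] by blast
qed

lemma closed_set_mem_sup:
  fixes t :: "nat \<Rightarrow> 'a::wellorder"
  assumes "closed_set E" and "mono t"
    and below: "\<And>k. t k < \<sigma>" and cofinal: "\<And>\<gamma>. \<gamma> < \<sigma> \<Longrightarrow> \<exists>k. \<gamma> < t k"
    and frequent: "\<And>k. \<exists>m\<ge>k. t m \<in> E"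
  shows "\<sigma> \<in> E"
proof (rule closed_setD[OF assms(1)])
  show "is_limit \<sigma>" unfolding is_limit_def using below cofinal by (meson order.strict_trans)
  show "cofinal_in (E \<inter> range t) \<sigma>" unfolding cofinal_in_def
  proof (intro conjI allI impI)
    show "E \<inter> range t \<subseteq> {..<\<sigma>}" using below by auto
    fix \<gamma> assume "\<gamma> < \<sigma>"
    then obtain k where "\<gamma> < t k" using cofinal by blast
    moreover obtain m where "m \<ge> k" "t m \<in> E" using frequent by blast
    moreover have "t k \<le> t m" using \<open>mono t\<close> \<open>m \<ge> k\<close> by (rule monoD)
    ultimately have "\<gamma> \<le> t m" by simp
    then show "\<exists>a\<in>E \<inter> range t. \<gamma> \<le> a" using \<open>t m \<in> E\<close> by blast
  qed
qed simp

lemma omega1_strict_mono_sup: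
  fixes t :: "nat \<Rightarrow> 'a::wellorder"
  assumes "is_omega1_type TYPE('a)" and "strict_mono t"
  shows "\<exists>\<sigma>. (\<forall>k. t k < \<sigma>) \<and> (\<forall>\<gamma><\<sigma>. \<exists>k. \<gamma> < t k)"
proof -
  obtain b where "\<forall>k. t k < b" using omega1_countable_bounded[OF assms(1), of "range t"] by auto
  define \<sigma> where "\<sigma> = (LEAST b. \<forall>k. t k < b)"
  have "\<forall>k. t k < \<sigma>" unfolding \<sigma>_def by (rule LeastI) fact
  moreover have "\<exists>k. \<gamma> < t k" if "\<gamma> < \<sigma>" for \<gamma>
  proof (rule ccontr)
    assume "\<nexists>k. \<gamma> < t k"
    then have "t (Suc k) \<le> \<gamma>" for k by (simp add: not_less)
    then have "\<forall>k. t k < \<gamma>"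
      using assms(2) by (meson order.strict_trans2 strict_mono_Suc_iff)
    then have "\<sigma> \<le> \<gamma>" unfolding \<sigma>_def by (rule Least_le)
    then show False using that by simp
  qed
  ultimately show ?thesis by blast
qed

lemma strict_mono_chain:
  fixes \<gamma> :: "'a::order"
  assumes "\<And>n x. \<exists>y\<in>G n x. x < y"
  shows "\<exists>t. t 0 = \<gamma> \<and> strict_mono t \<and> (\<forall>n. t (Suc n) \<in> G n (t n))"
proof -
  have "\<exists>t. \<forall>n. (n = 0 \<longrightarrow> t n = \<gamma>) \<and> (t n < t (Suc n) \<and> t (Suc n) \<in> G n (t n))"
  proof (rule dependent_nat_choice)
    fix x n
    obtain y where "y \<in> G n x" "x < y" using assms by blast
    then show "\<exists>y. (Suc n = 0 \<longrightarrow> y = \<gamma>) \<and> x < y \<and> y \<in> G n x" by blast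
  qed blast
  then show ?thesis by (auto simp: strict_mono_Suc_iff)
qed

lemma club_countable_Inter:
  fixes \<F> :: "'a::wellorder set set"
  assumes "is_omega1_type TYPE('a)" and "countable \<F>" and "\<And>E. E \<in> \<F> \<Longrightarrow> club E"
  shows "club (\<Inter>\<F>)"
proof -
  have "\<exists>a\<in>\<Inter>\<F>. \<gamma> \<le> a" for \<gamma>
  proof (cases "\<F> = {}")
    case False
    define e where "e = from_nat_into \<F>"
    have e: "closed_set (e i) \<and> unbounded (e i)" for i
      using assms(3) from_nat_into[OF False] unfolding e_def club_def by blast
    obtain t where t: "t 0 = \<gamma>" "strict_mono t" "\<forall>n. t (Suc n) \<in> e (fst (prod_decode n))"
      using strict_mono_chain[of "\<lambda>n _. e (fst (prod_decode n))" \<gamma>]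
        omega1_unbounded_gt[OF assms(1)] e by blast
    obtain \<sigma> where \<sigma>: "\<forall>k. t k < \<sigma>" "\<forall>\<eta><\<sigma>. \<exists>k. \<eta> < t k"
      using omega1_strict_mono_sup[OF assms(1) t(2)] by blast
    have "\<sigma> \<in> e i" for i
    proof (rule closed_set_mem_sup[of _ t])
      fix k
      have "t (Suc (prod_encode (i, k))) \<in> e i" using t(3) by (metis fst_conv prod_encode_inverse)
      moreover have "k \<le> Suc (prod_encode (i, k))" using le_prod_encode_2 le_SucI by blast
      ultimately show "\<exists>m\<ge>k. t m \<in> e i" by blast
    qed (use e t(2) \<sigma> strict_mono_mono in auto)
    then have "\<sigma> \<in> \<Inter>\<F>" using from_nat_into_surj[OF assms(2)] unfolding e_def by blast
    moreover have "\<gamma> \<le> \<sigma>" using \<sigma>(1) t(1) less_imp_le by blast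
    ultimately show ?thesis by blast
  qed auto
  then show ?thesis
    using closed_set_Inter assms(3) unfolding club_def unbounded_def by blast
qed

lemma club_Int:
  fixes A B :: "'a::wellorder set"
  assumes "is_omega1_type TYPE('a)" and "club A" and "club B"
  shows "club (A \<inter> B)"
proof -
  have "club (\<Inter>{A, B})" by (rule club_countable_Inter) (use assms in auto)
  then show ?thesis by simp
qed

definition diagonal_Inter :: "('a::wellorder \<Rightarrow> 'a set) \<Rightarrow> 'a set" where
  "diagonal_Inter D = {\<gamma>. \<forall>\<delta><\<gamma>. \<gamma> \<in> D \<delta>}"

lemma closed_set_diagonal_Inter:
  assumes "\<And>\<delta>. closed_set (D \<delta>)"
  shows "closed_set (diagonal_Inter D)"
  unfolding closed_set_def
proof (intro allI impI)
  fix \<sigma> assume \<sigma>: "is_limit \<sigma> \<and> cofinal_in (diagonal_Inter D \<inter> {..<\<sigma>}) \<sigma>"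
  have "\<sigma> \<in> D \<delta>" if "\<delta> < \<sigma>" for \<delta>
  proof (rule closed_setD[OF assms, of \<sigma> "diagonal_Inter D \<inter> {\<delta><..<\<sigma>}"])
    show "cofinal_in (diagonal_Inter D \<inter> {\<delta><..<\<sigma>}) \<sigma>" unfolding cofinal_in_def
    proof (intro conjI allI impI)
      fix \<eta> assume "\<eta> < \<sigma>"
      then obtain \<eta>' where "max \<eta> \<delta> < \<eta>'" "\<eta>' < \<sigma>"
        using \<sigma> \<open>\<delta> < \<sigma>\<close> unfolding is_limit_def by (metis max_less_iff_conj)
      moreover obtain a where "a \<in> diagonal_Inter D" "a < \<sigma>" "\<eta>' \<le> a"
        using \<sigma> \<open>\<eta>' < \<sigma>\<close> unfolding cofinal_in_def by blast
      ultimately have "\<eta> < a" "\<delta> < a" by (metis max_less_iff_conj order.strict_trans2)+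
      then show "\<exists>a\<in>diagonal_Inter D \<inter> {\<delta><..<\<sigma>}. \<eta> \<le> a"
        using \<open>a \<in> diagonal_Inter D\<close> \<open>a < \<sigma>\<close> by (intro bexI[of _ a]) auto
    qed auto
    show "diagonal_Inter D \<inter> {\<delta><..<\<sigma>} \<subseteq> D \<delta>" unfolding diagonal_Inter_def by auto
  qed (use \<sigma> in blast)
  then show "\<sigma> \<in> diagonal_Inter D" unfolding diagonal_Inter_def by blast
qed

lemma omega1_unbounded_diagonal_Inter:
  fixes D :: "'a::wellorder \<Rightarrow> 'a set"
  assumes "is_omega1_type TYPE('a)" and "\<And>\<delta>. club (D \<delta>)"
  shows "unbounded (diagonal_Inter D)"
  unfolding unbounded_def
proof
  fix \<gamma>
  have "club (\<Inter>(D ` {..<x}))" for x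
    using assms club_countable_Inter unfolding is_omega1_type_def by blast
  then obtain t where t: "t 0 = \<gamma>" "strict_mono t" "\<forall>n. t (Suc n) \<in> \<Inter>(D ` {..<t n})"
    using strict_mono_chain[of "\<lambda>_ x. \<Inter>(D ` {..<x})" \<gamma>] omega1_unbounded_gt[OF assms(1)]
    unfolding club_def by blast
  obtain \<sigma> where \<sigma>: "\<forall>k. t k < \<sigma>" "\<forall>\<eta><\<sigma>. \<exists>k. \<eta> < t k"
    using omega1_strict_mono_sup[OF assms(1) t(2)] by blast
  have "\<sigma> \<in> D \<delta>" if \<delta>: "\<delta> < \<sigma>" for \<delta>
  proof -
    obtain k where "\<delta> < t k" using \<sigma>(2) \<delta> by blast
    have "\<exists>m\<ge>j. t m \<in> D \<delta>" for j
    proof (intro exI conjI)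
      have "t k \<le> t (max j k)" using t(2) strict_mono_less_eq by fastforce
      then show "t (Suc (max j k)) \<in> D \<delta>" using t(3) \<open>\<delta> < t k\<close> by fastforce
    qed simp
    then show ?thesis
      using closed_set_mem_sup[of "D \<delta>" t] assms(2) t(2) \<sigma> strict_mono_mono
      unfolding club_def by blast
  qed
  then have "\<sigma> \<in> diagonal_Inter D" unfolding diagonal_Inter_def by blast
  moreover have "\<gamma> \<le> \<sigma>" using \<sigma>(1) t(1) less_imp_le by blast
  ultimately show "\<exists>a\<in>diagonal_Inter D. \<gamma> \<le> a" by blast
qed

lemma club_atLeast: "club {\<gamma>::'a::wellorder..}"
  unfolding club_def closed_set_def unbounded_def
proof (intro conjI allI impI)
  fix \<delta> :: 'a assume "is_limit \<delta> \<and> cofinal_in ({\<gamma>..} \<inter> {..<\<delta>}) \<delta>"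
  then show "\<delta> \<in> {\<gamma>..}" unfolding is_limit_def cofinal_in_def by fastforce
next
  fix \<eta> :: 'a show "\<exists>a\<in>{\<gamma>..}. \<eta> \<le> a" by (intro bexI[of _ "max \<gamma> \<eta>"]) auto
qed

lemma stationary_imp_unbounded: "stationary S \<Longrightarrow> unbounded S"
  unfolding stationary_def unbounded_def using club_atLeast by fastforce

lemma superclub_seq_diagonal_guessing:
  fixes A D :: "'a::wellorder \<Rightarrow> 'a set"
  assumes "is_omega1_type TYPE('a)" and "superclub_seq A" and "club E" and "\<And>\<delta>. club (D \<delta>)"
    and "\<And>\<delta>. is_limit \<delta> \<Longrightarrow> A \<delta> \<subseteq> E \<Longrightarrow> A \<delta> \<subseteq> D \<delta>"
  shows "\<exists>y. unbounded y \<and> stationary {\<delta>. is_limit \<delta> \<and> A \<delta> \<subseteq> E \<and> y \<subseteq> D \<delta>}"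
proof -
  have "club (diagonal_Inter D)"
    using closed_set_diagonal_Inter omega1_unbounded_diagonal_Inter assms(1,4)
    unfolding club_def by blast
  then have "unbounded (E \<inter> diagonal_Inter D)"
    using club_Int[OF assms(1,3)] unfolding club_def by blast
  then obtain y where y: "y \<subseteq> E \<inter> diagonal_Inter D" "unbounded y"
    and guessed: "stationary {\<delta>. is_limit \<delta> \<and> y \<inter> {..<\<delta>} = A \<delta>}"
    using assms(2) unfolding superclub_seq_def by blast
  have "A \<delta> \<subseteq> E \<and> y \<subseteq> D \<delta>" if \<delta>: "is_limit \<delta>" "y \<inter> {..<\<delta>} = A \<delta>" for \<delta>
  proof
    show "A \<delta> \<subseteq> E" using \<delta>(2) y(1) by blast
    then have AD: "A \<delta> \<subseteq> D \<delta>" using assms(5) \<delta>(1) by blast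
    show "y \<subseteq> D \<delta>"
    proof
      fix a assume "a \<in> y"
      show "a \<in> D \<delta>"
      proof (cases a \<delta> rule: linorder_cases)
        case less
        then show ?thesis using AD \<delta>(2) \<open>a \<in> y\<close> by blast
      next
        case equal
        have "cofinal_in (A \<delta>) \<delta>" using assms(2) \<delta>(1) unfolding superclub_seq_def by blast
        then have "\<delta> \<in> D \<delta>" using closed_setD AD assms(4) \<delta>(1) unfolding club_def by blast
        then show ?thesis using equal by simp
      next
        case greater
        then show ?thesis using \<open>a \<in> y\<close> y(1) unfolding diagonal_Inter_def by blast
      qed
    qed
  qed
  then have "stationary {\<delta>. is_limit \<delta> \<and> A \<delta> \<subseteq> E \<and> y \<subseteq> D \<delta>}"
    using guessed unfolding stationary_def by blast
  then show ?thesis using y(2) by blast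
qed

lemma omega1_inj_witnesses:
  fixes P :: "'a::wellorder \<Rightarrow> 'b \<Rightarrow> bool"
  assumes "is_omega1_type TYPE('a)" and "\<nexists>f :: 'b \<Rightarrow> 'a. inj f"
  shows "\<exists>\<alpha>\<^sub>0 (\<beta> :: 'a \<Rightarrow> 'b). inj \<beta> \<and> (\<forall>\<delta>. P \<delta> \<alpha>\<^sub>0 \<longrightarrow> P \<delta> (\<beta> \<delta>))"
proof -
  have "infinite (UNIV :: 'a set)"
    using assms(1) countable_finite unfolding is_omega1_type_def by blast
  note large = this assms(2)
  obtain \<alpha>\<^sub>0 where \<alpha>\<^sub>0: "\<forall>\<delta>. P \<delta> \<alpha>\<^sub>0 \<longrightarrow> uncountable {\<alpha>. P \<delta> \<alpha>}"
    using ex_point_only_in_uncountable_members[OF large, of "\<lambda>\<delta>. {\<alpha>. P \<delta> \<alpha>}"] by auto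
  have "uncountable (UNIV :: 'b set)"
    using ex_point_only_in_uncountable_members[OF large, of "\<lambda>_. UNIV"] by blast
  define X where "X \<delta> = (if P \<delta> \<alpha>\<^sub>0 then {\<alpha>. P \<delta> \<alpha>} else UNIV)" for \<delta>
  have "uncountable (X \<delta>)" for \<delta>
    using \<alpha>\<^sub>0 \<open>uncountable UNIV\<close> unfolding X_def by simp
  then obtain \<beta> :: "'a \<Rightarrow> 'b" where "inj \<beta>" and "\<forall>\<delta>. \<beta> \<delta> \<in> X \<delta>"
    using omega1_inj_choice[OF assms(1), of X] by blast
  then show ?thesis unfolding X_def by (metis UNIV_I mem_Collect_eq)
qed

lemma omega1_inj_into_stationary:
  fixes S :: "'a::wellorder set"
  assumes "is_omega1_type TYPE('a)" and "stationary S"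
  shows "\<exists>f :: 'a \<Rightarrow> 'a. inj f \<and> range f \<subseteq> S"
proof -
  have "uncountable S"
    using omega1_unbounded_imp_uncountable[OF assms(1) stationary_imp_unbounded[OF assms(2)]] .
  then show ?thesis using omega1_inj_choice[OF assms(1), of "\<lambda>_. S"] by blast
qed

theorem mainTheorem10:
  fixes C :: "'b::wellorder \<Rightarrow> 'a::wellorder set"
  assumes "is_omega1_type TYPE('a)"
    and "is_omega2_type TYPE('b) TYPE('a)"
    and "superclub TYPE('a)"
    and "\<forall>\<alpha>. club (C \<alpha>)"
  shows "\<exists>\<beta> :: 'a \<Rightarrow> 'b. inj \<beta> \<and> club (\<Inter>\<xi>. C (\<beta> \<xi>))"
proof -
  obtain A :: "'a \<Rightarrow> 'a set" where A: "superclub_seq A"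
    using assms(3) unfolding superclub_def by blast
  have "\<nexists>f :: 'b \<Rightarrow> 'a. inj f" using assms(2) unfolding is_omega2_type_def by blast
  then obtain \<alpha>\<^sub>0 and \<beta>\<^sub>0 :: "'a \<Rightarrow> 'b"
    where "inj \<beta>\<^sub>0" and \<beta>\<^sub>0: "\<forall>\<delta>. A \<delta> \<subseteq> C \<alpha>\<^sub>0 \<longrightarrow> A \<delta> \<subseteq> C (\<beta>\<^sub>0 \<delta>)"
    using omega1_inj_witnesses[OF assms(1), of "\<lambda>\<delta> \<alpha>. A \<delta> \<subseteq> C \<alpha>"] by blast
  obtain y where "unbounded y" and "stationary {\<delta>. is_limit \<delta> \<and> A \<delta> \<subseteq> C \<alpha>\<^sub>0 \<and> y \<subseteq> C (\<beta>\<^sub>0 \<delta>)}"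
    using superclub_seq_diagonal_guessing[OF assms(1) A, of "C \<alpha>\<^sub>0" "\<lambda>\<delta>. C (\<beta>\<^sub>0 \<delta>)"] assms(4) \<beta>\<^sub>0
    by blast
  then obtain f :: "'a \<Rightarrow> 'a"
    where "inj f" and "range f \<subseteq> {\<delta>. is_limit \<delta> \<and> A \<delta> \<subseteq> C \<alpha>\<^sub>0 \<and> y \<subseteq> C (\<beta>\<^sub>0 \<delta>)}"
    using omega1_inj_into_stationary[OF assms(1)] by blast
  then have y: "\<forall>\<xi>. y \<subseteq> C ((\<beta>\<^sub>0 \<circ> f) \<xi>)" by auto
  have "inj (\<beta>\<^sub>0 \<circ> f)" using \<open>inj \<beta>\<^sub>0\<close> \<open>inj f\<close> by (rule inj_compose)
  moreover have "closed_set (\<Inter>\<xi>. C ((\<beta>\<^sub>0 \<circ> f) \<xi>))"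
    by (rule closed_set_Inter) (use assms(4) in \<open>auto simp: club_def\<close>)
  moreover have "unbounded (\<Inter>\<xi>. C ((\<beta>\<^sub>0 \<circ> f) \<xi>))"
    using \<open>unbounded y\<close> y unfolding unbounded_def by fastforce
  ultimately show ?thesis unfolding club_def by blast
qed

end
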